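(* Let $i\in\{1,2\}$. Define a sequence $(b^{(i)}_n)_{n\geq 0}$ of polynomials in $q$ by $b^{(i)}_0=1$, $b^{(i)}_1=q$ if $i=1$ and $b^{(i)}_1=0$ if $i=2$, and \[ b^{(i)}_{n+2}=q^{n+2}\,b^{(i)}_{n}-q^{n+1}\,b^{(i)}_{n+1}\qquad (n\geq 0). \] Then, as formal power series in $q$, \[ \sum_{n\geq 0}\frac{b^{(i)}_n}{(q;q)_n}=\frac{1}{(q^i,q^{5-i};q^5)_{\infty}}. \]
   Context: Standard $q$-Pochhammer notation: $(a;q)_n=\prod_{k=0}^{n-1}(1-aq^k)$, $(a;q)_\infty=\prod_{k\geq 0}(1-aq^k)$, and $(a_1,\dots,a_m;q)_\infty=\prod_{j=1}^m(a_j;q)_\infty$. *)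

theory Defs
  imports "HOL-Computational_Algebra.Formal_Power_Series"
begin

definition qpoch :: "'a::comm_ring_1 fps \<Rightarrow> 'a fps \<Rightarrow> nat \<Rightarrow> 'a fps" where
  "qpoch a q n = (\<Prod>k<n. 1 - a * q ^ k)"

text \<open>Infinite q-Pochhammer symbol (a;q)_oo as the limit (in the X-adic metric
  topology of formal power series) of the finite products.\<close>
definition qpoch_inf :: "'a::comm_ring_1 fps \<Rightarrow> 'a fps \<Rightarrow> 'a fps" where
  "qpoch_inf a q = lim (\<lambda>n. qpoch a q n)"

fun bseq :: "nat \<Rightarrow> nat \<Rightarrow> rat fps" where
  "bseq i 0 = 1"
| "bseq i (Suc 0) = (if i = 1 then fps_X else 0)"
| "bseq i (Suc (Suc n)) = fps_X ^ (n + 2) * bseq i n - fps_X ^ (n + 1) * bseq i (Suc n)"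

end

theory Submission
  imports Defs
begin

text \<open>Write q = X and s = i - 1. The sums L_N = sum_{n <= N} b_n [N, n]_q satisfy
  L_{N+2} = L_{N+1} + q^{N+2} L_N, the recurrence of Schur's polynomials
  D_n = sum_t (-1)^t q^{t(5t+1+2s)/2} [n, floor((n-s-5t)/2)]_q, and the initial values agree,
  so L_N = D_{N+1}. As q^{n-1} divides b_n, L_N agrees with sum_{n <= N} b_n / (q;q)_n below
  degree N. When N tends to infinity every Gaussian binomial in D_{N+1} tends to 1/(q;q)_oo,
  so the series equals Theta_s / (q;q)_oo with Theta_s = sum_t (-1)^t q^{t(5t+1+2s)/2}.
  The same limit taken in the finite Jacobi triple product (a case of the q-binomial theorem)
  gives Theta_s = (q^5, q^{s+3}, q^{2-s}; q^5)_oo, and dividing by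
  (q;q)_oo = prod_{r=1..5} (q^r; q^5)_oo leaves 1/(q^{s+1}, q^{4-s}; q^5)_oo.\<close>

unbundle fps_syntax

section \<open>Coefficientwise agreement of formal power series\<close>

definition fps_agree :: "nat \<Rightarrow> 'a::zero fps \<Rightarrow> 'a fps \<Rightarrow> bool" where
  "fps_agree c f g \<longleftrightarrow> (\<forall>j\<le>c. f $ j = g $ j)"

lemma fps_agree_refl [simp]: "fps_agree c f f"
  by (simp add: fps_agree_def)

lemma fps_agree_sym: "fps_agree c f g \<Longrightarrow> fps_agree c g f"
  by (simp add: fps_agree_def)

lemma fps_agree_trans [trans]: "fps_agree c f g \<Longrightarrow> fps_agree c g h \<Longrightarrow> fps_agree c f h"
  by (simp add: fps_agree_def)

lemma fps_agree_mult:
  fixes f f' g g' :: "'a::comm_ring_1 fps"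
  shows "fps_agree c f f' \<Longrightarrow> fps_agree c g g' \<Longrightarrow> fps_agree c (f * g) (f' * g')"
  unfolding fps_agree_def fps_mult_nth by (auto intro!: sum.cong)

lemma fps_agree_inverse:
  fixes f g :: "'a::field fps"
  assumes "fps_agree c f g"
  shows "fps_agree c (inverse f) (inverse g)"
proof (cases "f $ 0 = 0")
  case True
  with assms have "g $ 0 = 0" by (auto simp: fps_agree_def)
  then have "inverse g = 0" by simp
  moreover from True have "inverse f = 0" by simp
  ultimately show ?thesis by (simp only: fps_agree_refl)
next
  case False
  with assms have g0: "g $ 0 \<noteq> 0" by (auto simp: fps_agree_def)
  have cutoff: "fps_cutoff (Suc c) f = fps_cutoff (Suc c) g"
    using assms by (simp add: fps_cutoff_eq_fps_cutoff_iff fps_agree_def less_Suc_eq_le)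
  have "fps_cutoff (Suc c) (inverse f) = fps_cutoff (Suc c) (inverse g)"
    using fps_cutoff_inverse[OF False, of "Suc c"] fps_cutoff_inverse[OF g0, of "Suc c"]
    by (simp add: cutoff)
  then show ?thesis
    by (simp add: fps_cutoff_eq_fps_cutoff_iff fps_agree_def less_Suc_eq_le)
qed

lemma fps_eq_iff_agree: "f = g \<longleftrightarrow> (\<forall>c. fps_agree c f g)"
  by (auto simp: fps_agree_def fps_eq_iff)

lemma tendsto_fps_iff_agree:
  fixes f :: "nat \<Rightarrow> 'a::group_add fps"
  shows "f \<longlonglongrightarrow> g \<longleftrightarrow> (\<forall>c. eventually (\<lambda>n. fps_agree c (f n) g) sequentially)"
  unfolding tendsto_fps_iff fps_agree_def
proof safe
  fix c
  assume "\<forall>j. eventually (\<lambda>n. f n $ j = g $ j) sequentially"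
  then have "eventually (\<lambda>n. \<forall>j\<in>{..c}. f n $ j = g $ j) sequentially"
    by (intro eventually_ball_finite) auto
  then show "eventually (\<lambda>n. \<forall>j\<le>c. f n $ j = g $ j) sequentially"
    by (auto elim: eventually_mono)
next
  fix j
  assume "\<forall>c. eventually (\<lambda>n. \<forall>j\<le>c. f n $ j = g $ j) sequentially"
  then have "eventually (\<lambda>n. \<forall>i\<le>j. f n $ i = g $ i) sequentially" by blast
  then show "eventually (\<lambda>n. f n $ j = g $ j) sequentially"
    by (rule eventually_mono) simp
qed

section \<open>\<open>q\<close>-Pochhammer symbols in powers of \<open>X\<close>\<close>

lemma qpoch_0 [simp]: "qpoch a q 0 = 1"
  by (simp add: qpoch_def)

lemma qpoch_Suc: "qpoch a q (Suc n) = qpoch a q n * (1 - a * q ^ n)"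
  by (simp add: qpoch_def)

lemma qpoch_nth_0: "a $ 0 = 0 \<Longrightarrow> qpoch a q n $ 0 = 1"
  by (induction n) (simp_all add: qpoch_Suc)

lemma qpoch_fps_X_power:
  "qpoch (fps_X ^ r :: 'a::comm_ring_1 fps) (fps_X ^ d) n = (\<Prod>k<n. 1 - fps_X ^ (r + d * k))"
  unfolding qpoch_def by (simp add: power_add power_mult)

lemma fps_mult_one_minus_X_power_nth:
  "j < e \<Longrightarrow> (f * (1 - fps_X ^ e)) $ j = (f :: 'a::comm_ring_1 fps) $ j"
  by (simp add: right_diff_distrib fps_X_power_mult_right_nth)

lemma qpoch_fps_X_power_nth_stable:
  fixes r d :: nat
  assumes "r \<ge> 1" "d \<ge> 1" "j \<le> m" "m \<le> m'"
  shows "qpoch (fps_X ^ r :: 'a::comm_ring_1 fps) (fps_X ^ d) m' $ j =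
         qpoch (fps_X ^ r :: 'a fps) (fps_X ^ d) m $ j"
  using assms(4)
proof (induction m' rule: dec_induct)
  case (step n)
  have "n \<le> d * n" using assms(2) by simp
  then have "j < r + d * n" using assms(1,3) step.hyps(1) by linarith
  moreover have "fps_X ^ r * (fps_X ^ d) ^ n = (fps_X ^ (r + d * n) :: 'a fps)"
    by (simp add: power_add power_mult)
  ultimately show ?case
    using step.IH by (simp add: qpoch_Suc fps_mult_one_minus_X_power_nth)
qed simp

lemma qpoch_fps_X_power_tendsto:
  assumes "r \<ge> 1" "d \<ge> 1"
  shows "(\<lambda>n. qpoch (fps_X ^ r :: 'a::comm_ring_1 fps) (fps_X ^ d) n) \<longlonglongrightarrow>
           qpoch_inf (fps_X ^ r) (fps_X ^ d)"
proof -
  let ?P = "qpoch (fps_X ^ r :: 'a fps) (fps_X ^ d)"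
  have "?P \<longlonglongrightarrow> Abs_fps (\<lambda>j. ?P j $ j)"
    unfolding tendsto_fps_iff
    using qpoch_fps_X_power_nth_stable[OF assms] by (auto simp: eventually_sequentially)
  moreover from this have "qpoch_inf (fps_X ^ r) (fps_X ^ d) = Abs_fps (\<lambda>j. ?P j $ j)"
    unfolding qpoch_inf_def by (rule limI)
  ultimately show ?thesis by simp
qed

lemma fps_agree_qpoch_inf:
  assumes "r \<ge> 1" "d \<ge> 1" "c \<le> m"
  shows "fps_agree c (qpoch_inf (fps_X ^ r :: 'a::comm_ring_1 fps) (fps_X ^ d))
                     (qpoch (fps_X ^ r) (fps_X ^ d) m)"
proof -
  have "eventually (\<lambda>n. fps_agree c (qpoch (fps_X ^ r :: 'a fps) (fps_X ^ d) n)
                                      (qpoch_inf (fps_X ^ r) (fps_X ^ d))) sequentially"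
    using qpoch_fps_X_power_tendsto[OF assms(1,2)] tendsto_fps_iff_agree by blast
  then obtain n where n: "n \<ge> m"
    and "fps_agree c (qpoch (fps_X ^ r :: 'a fps) (fps_X ^ d) n) (qpoch_inf (fps_X ^ r) (fps_X ^ d))"
    by (metis eventually_sequentially nat_le_linear)
  moreover have "fps_agree c (qpoch (fps_X ^ r :: 'a fps) (fps_X ^ d) n) (qpoch (fps_X ^ r) (fps_X ^ d) m)"
    unfolding fps_agree_def
    by (meson assms(3) le_trans qpoch_fps_X_power_nth_stable[OF assms(1,2) _ n])
  ultimately show ?thesis
    by (meson fps_agree_sym fps_agree_trans)
qed

lemma qpoch_inf_fps_X_power_nth_0 [simp]:
  "r \<ge> 1 \<Longrightarrow> d \<ge> 1 \<Longrightarrow> qpoch_inf (fps_X ^ r :: 'a::comm_ring_1 fps) (fps_X ^ d) $ 0 = 1"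
  using fps_agree_qpoch_inf[of r d 0 0] by (simp add: fps_agree_def)

section \<open>Gaussian binomial coefficients\<close>

fun qbinomial :: "'a::comm_ring_1 fps \<Rightarrow> nat \<Rightarrow> nat \<Rightarrow> 'a fps" where
  "qbinomial p 0 k = (if k = 0 then 1 else 0)"
| "qbinomial p (Suc n) 0 = 1"
| qbinomial_Suc_Suc:
    "qbinomial p (Suc n) (Suc k) = qbinomial p n k + p ^ Suc k * qbinomial p n (Suc k)"

declare qbinomial_Suc_Suc [simp del]

abbreviation qfact :: "'a::comm_ring_1 fps \<Rightarrow> nat \<Rightarrow> 'a fps" where
  "qfact p n \<equiv> qpoch p p n"

lemma qfact_Suc: "qfact p (Suc n) = qfact p n * (1 - p ^ Suc n)"
  by (simp add: qpoch_Suc)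

lemma qbinomial_eq_0: "n < k \<Longrightarrow> qbinomial p n k = 0"
  by (induction n arbitrary: k) (auto simp: qbinomial_Suc_Suc elim: lessE less_SucE split: nat.split)

lemma qbinomial_0_right [simp]: "qbinomial p n 0 = 1"
  by (cases n) auto

lemma qbinomial_self [simp]: "qbinomial p n n = 1"
  by (induction n) (auto simp: qbinomial_Suc_Suc qbinomial_eq_0)

lemma qbinomial_mult_qfact:
  "k \<le> n \<Longrightarrow> qbinomial p n k * (qfact p k * qfact p (n - k)) = qfact p n"
proof (induction n arbitrary: k)
  case (Suc n)
  show ?case
  proof (cases k)
    case (Suc k')
    have k': "k' \<le> n" using Suc.prems Suc by simp
    have left: "qbinomial p n k' * (qfact p (Suc k') * qfact p (n - k')) = qfact p n * (1 - p ^ Suc k')"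
    proof -
      have "qbinomial p n k' * (qfact p (Suc k') * qfact p (n - k')) =
            qbinomial p n k' * (qfact p k' * qfact p (n - k')) * (1 - p ^ Suc k')"
        by (simp only: qfact_Suc ac_simps)
      then show ?thesis using Suc.IH[OF k'] by simp
    qed
    have right: "p ^ Suc k' * qbinomial p n (Suc k') * (qfact p (Suc k') * qfact p (n - k')) =
                 qfact p n * (p ^ Suc k' - p ^ Suc n)"
    proof (cases "k' = n")
      case False
      then have k'': "Suc k' \<le> n" using k' by simp
      then have split: "n - k' = Suc (n - Suc k')" by simp
      have "Suc k' + (n - k') = Suc n" using k'' by simp
      then have exponents: "p ^ Suc k' * p ^ (n - k') = p ^ Suc n" by (metis power_add)
      have "p ^ Suc k' * qbinomial p n (Suc k') * (qfact p (Suc k') * qfact p (n - k')) =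
            p ^ Suc k' * (qbinomial p n (Suc k') * (qfact p (Suc k') * qfact p (n - Suc k'))) *
              (1 - p ^ (n - k'))"
        unfolding split qfact_Suc by (simp only: ac_simps)
      also have "\<dots> = qfact p n * (p ^ Suc k' - p ^ Suc k' * p ^ (n - k'))"
        unfolding Suc.IH[OF k''] by (simp add: algebra_simps)
      finally show ?thesis unfolding exponents .
    qed (simp add: qbinomial_eq_0)
    have "qbinomial p (Suc n) k * (qfact p k * qfact p (Suc n - k)) =
          qbinomial p n k' * (qfact p (Suc k') * qfact p (n - k')) +
          p ^ Suc k' * qbinomial p n (Suc k') * (qfact p (Suc k') * qfact p (n - k'))"
      by (simp add: Suc qbinomial_Suc_Suc algebra_simps)
    also have "\<dots> = qfact p (Suc n)"
      unfolding left right by (simp add: qfact_Suc algebra_simps)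
    finally show ?thesis .
  qed simp
qed simp

lemma qfact_nonzero: "p $ 0 = 0 \<Longrightarrow> qfact p n \<noteq> 0"
  using qpoch_nth_0[of p p n] by auto

text \<open>The mirrored Pascal rule. It is proved by cancelling \<open>q\<close>-factorials, whence the integral
  domain and \<open>p $ 0 = 0\<close>.\<close>
lemma qbinomial_Suc_Suc':
  fixes p :: "'a::idom fps"
  assumes p0: "p $ 0 = 0"
  shows "qbinomial p (Suc n) (Suc k) = qbinomial p n (Suc k) + p ^ (n - k) * qbinomial p n k"
proof (cases "Suc k \<le> n")
  case True
  define V where "V = qfact p (Suc k) * qfact p (n - k)"
  have split: "n - k = Suc (n - Suc k)" using True by simp
  have "qbinomial p n (Suc k) * V =
        qbinomial p n (Suc k) * (qfact p (Suc k) * qfact p (n - Suc k)) * (1 - p ^ (n - k))"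
    unfolding V_def split qfact_Suc by (simp only: ac_simps)
  then have first: "qbinomial p n (Suc k) * V = qfact p n * (1 - p ^ (n - k))"
    using qbinomial_mult_qfact[OF True, of p] by simp
  have "p ^ (n - k) * qbinomial p n k * V =
        p ^ (n - k) * (qbinomial p n k * (qfact p k * qfact p (n - k))) * (1 - p ^ Suc k)"
    unfolding V_def qfact_Suc by (simp only: ac_simps)
  then have second: "p ^ (n - k) * qbinomial p n k * V = p ^ (n - k) * qfact p n * (1 - p ^ Suc k)"
    using qbinomial_mult_qfact[of k n p] True by simp
  have "n - k + Suc k = Suc n" using True by simp
  then have exponents: "p ^ (n - k) * p ^ Suc k = p ^ Suc n" by (metis power_add)
  have "(qbinomial p n (Suc k) + p ^ (n - k) * qbinomial p n k) * V =
        qfact p n * (1 - p ^ (n - k)) + p ^ (n - k) * qfact p n * (1 - p ^ Suc k)"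
    unfolding distrib_right first second ..
  also have "\<dots> = qfact p n * (1 - p ^ (n - k) * p ^ Suc k)" by (simp add: algebra_simps)
  also have "\<dots> = qfact p (Suc n)" unfolding exponents qfact_Suc ..
  also have "\<dots> = qbinomial p (Suc n) (Suc k) * V"
    unfolding V_def using qbinomial_mult_qfact[of "Suc k" "Suc n" p] True by simp
  finally show ?thesis
    using qfact_nonzero[OF p0] by (simp add: V_def)
next
  case False
  then have "n < Suc k" by simp
  then show ?thesis by (cases "k = n") (simp_all add: qbinomial_eq_0)
qed

definition qbinomial_int :: "'a::comm_ring_1 fps \<Rightarrow> nat \<Rightarrow> int \<Rightarrow> 'a fps" where
  "qbinomial_int p n k = (if k < 0 then 0 else qbinomial p n (nat k))"

lemma qbinomial_int_nonzero_imp: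
  assumes "qbinomial_int p n k \<noteq> 0"
  shows "0 \<le> k \<and> k \<le> int n"
proof -
  from assms have "0 \<le> k" and "qbinomial p n (nat k) \<noteq> 0"
    unfolding qbinomial_int_def by (auto split: if_splits)
  then show ?thesis using qbinomial_eq_0[of n "nat k" p] by linarith
qed

lemma qbinomial_int_eq_0: "k < 0 \<or> k > int n \<Longrightarrow> qbinomial_int p n k = 0"
  using qbinomial_int_nonzero_imp by force

lemma qbinomial_int_Suc:
  "qbinomial_int p (Suc n) (k + 1) = qbinomial_int p n k + p ^ nat (k + 1) * qbinomial_int p n (k + 1)"
proof (cases "k < 0")
  case False
  then have "nat (k + 1) = Suc (nat k)" by simp
  with False show ?thesis by (simp add: qbinomial_int_def qbinomial_Suc_Suc)
qed (auto simp: qbinomial_int_def)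

lemma qbinomial_int_Suc':
  fixes p :: "'a::idom fps"
  assumes "p $ 0 = 0"
  shows "qbinomial_int p (Suc n) (k + 1) = qbinomial_int p n (k + 1) + p ^ nat (int n - k) * qbinomial_int p n k"
proof (cases "k < 0")
  case False
  then have "nat (k + 1) = Suc (nat k)" "nat (int n - k) = n - nat k" by auto
  with False show ?thesis using qbinomial_Suc_Suc'[OF assms, of n "nat k"] by (simp add: qbinomial_int_def)
qed (auto simp: qbinomial_int_def)

lemma power_mult_qbinomial_int_cong:
  assumes "0 \<le> k \<Longrightarrow> k \<le> int n \<Longrightarrow> e = e'"
  shows "x ^ e * qbinomial_int p n k = x ^ e' * qbinomial_int p n k"
  using assms qbinomial_int_nonzero_imp[of p n k] by (cases "qbinomial_int p n k = 0") auto

lemma qbinomial_int_Suc_Suc_diff: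
  fixes p :: "'a::idom fps"
  assumes "p $ 0 = 0"
  shows "qbinomial_int p (Suc (Suc n)) (k + 1) - qbinomial_int p (Suc n) k - p ^ Suc n * qbinomial_int p n k =
         p ^ nat (k + 1) * qbinomial_int p n (k + 1)"
proof -
  have "qbinomial_int p (Suc (Suc n)) (k + 1) - qbinomial_int p (Suc n) k - p ^ Suc n * qbinomial_int p n k =
        p ^ nat (k + 1) * qbinomial_int p n (k + 1) + p ^ (nat (k + 1) + nat (int n - k)) * qbinomial_int p n k
          - p ^ Suc n * qbinomial_int p n k"
  proof -
    have "qbinomial_int p (Suc (Suc n)) (k + 1) = qbinomial_int p (Suc n) k + p ^ nat (k + 1) * qbinomial_int p (Suc n) (k + 1)"
      by (rule qbinomial_int_Suc)
    moreover have "qbinomial_int p (Suc n) (k + 1) = qbinomial_int p n (k + 1) + p ^ nat (int n - k) * qbinomial_int p n k"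
      by (rule qbinomial_int_Suc'[OF assms])
    ultimately show ?thesis by (simp add: algebra_simps power_add)
  qed
  also have "p ^ (nat (k + 1) + nat (int n - k)) * qbinomial_int p n k = p ^ Suc n * qbinomial_int p n k"
    by (rule power_mult_qbinomial_int_cong) linarith
  finally show ?thesis by simp
qed

lemma qbinomial_int_Suc_Suc_diff':
  fixes p :: "'a::idom fps"
  assumes "p $ 0 = 0"
  shows "qbinomial_int p (Suc (Suc n)) (k + 1) - qbinomial_int p (Suc n) (k + 1) - p ^ Suc n * qbinomial_int p n k =
         p ^ nat (1 + int n - k) * qbinomial_int p n (k - 1)"
proof -
  have "qbinomial_int p (Suc n) k = qbinomial_int p n (k - 1) + p ^ nat k * qbinomial_int p n k"
    using qbinomial_int_Suc[of p n "k - 1"] by simp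
  then have "qbinomial_int p (Suc (Suc n)) (k + 1) - qbinomial_int p (Suc n) (k + 1) - p ^ Suc n * qbinomial_int p n k =
        p ^ nat (1 + int n - k) * qbinomial_int p n (k - 1) + p ^ (nat (1 + int n - k) + nat k) * qbinomial_int p n k
          - p ^ Suc n * qbinomial_int p n k"
    using qbinomial_int_Suc'[OF assms, of "Suc n" k] by (simp add: algebra_simps power_add)
  also have "p ^ (nat (1 + int n - k) + nat k) * qbinomial_int p n k = p ^ Suc n * qbinomial_int p n k"
    by (rule power_mult_qbinomial_int_cong) linarith
  finally show ?thesis by simp
qed

lemma qbinomial_eq_qfact_quotient:
  fixes p :: "'a::field fps"
  assumes "k \<le> n" "p $ 0 = 0"
  shows "qbinomial p n k = qfact p n * inverse (qfact p k * qfact p (n - k))"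
proof -
  have "(qfact p k * qfact p (n - k)) $ 0 \<noteq> 0" using qpoch_nth_0[OF assms(2)] by simp
  then show ?thesis
    using qbinomial_mult_qfact[OF assms(1), of p] inverse_mult_eq_1'
    by (metis mult.assoc mult.right_neutral)
qed

lemma fps_agree_qbinomial_inverse_qpoch_inf:
  assumes "d \<ge> 1" "k \<le> n" "c \<le> k" "c \<le> n - k"
  shows "fps_agree c (qbinomial (fps_X ^ d :: 'a::field fps) n k)
                     (inverse (qpoch_inf (fps_X ^ d) (fps_X ^ d)))"
proof -
  let ?P = "qpoch_inf (fps_X ^ d :: 'a fps) (fps_X ^ d)"
  have X0: "(fps_X ^ d :: 'a fps) $ 0 = 0" using assms(1) by simp
  have "fps_agree c (qbinomial (fps_X ^ d) n k) (?P * inverse (?P * ?P))"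
    unfolding qbinomial_eq_qfact_quotient[OF assms(2) X0] using assms
    by (intro fps_agree_mult fps_agree_inverse fps_agree_sym[OF fps_agree_qpoch_inf]) auto
  also have "?P * inverse (?P * ?P) = inverse ?P"
    using inverse_mult_eq_1'[of ?P] assms(1) by (simp add: fps_inverse_mult)
  finally show ?thesis .
qed

lemma fps_agree_qbinomial_inverse_qfact:
  assumes "d \<ge> 1" "k \<le> n" "c \<le> n - k"
  shows "fps_agree c (qbinomial (fps_X ^ d :: 'a::field fps) n k) (inverse (qfact (fps_X ^ d) k))"
proof -
  let ?u = "qfact (fps_X ^ d :: 'a fps)"
  have X0: "(fps_X ^ d :: 'a fps) $ 0 = 0" using assms(1) by simp
  have "fps_agree c (?u n) (?u (n - k))"
    unfolding fps_agree_def
    by (meson assms(3) diff_le_self le_trans qpoch_fps_X_power_nth_stable[OF assms(1,1)])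
  then have "fps_agree c (qbinomial (fps_X ^ d) n k) (?u (n - k) * inverse (?u k * ?u (n - k)))"
    unfolding qbinomial_eq_qfact_quotient[OF assms(2) X0] by (intro fps_agree_mult) simp_all
  also have "?u (n - k) * inverse (?u k * ?u (n - k)) = inverse (?u k)"
    using inverse_mult_eq_1'[of "?u (n - k)"] qpoch_nth_0[of "fps_X ^ d :: 'a fps"] assms(1)
    by (simp add: fps_inverse_mult algebra_simps)
  finally show ?thesis .
qed

lemma sum_atMost_Suc_reindex:
  fixes f :: "nat \<Rightarrow> 'a::ab_group_add"
  shows "(\<Sum>n\<le>N. f (Suc n)) = (\<Sum>n\<le>N. f n) - f 0 + f (Suc N)"
  using sum.atMost_Suc_shift[of f N] sum.atMost_Suc[of f N] by (simp add: algebra_simps)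

lemma Suc_choose_two: "Suc k choose 2 = (k choose 2) + k"
  by (simp add: numeral_2_eq_2)

lemma qbinomial_theorem:
  fixes p :: "'a::idom fps"
  assumes p0: "p $ 0 = 0"
  shows "(\<Prod>j<m. z + y * p ^ j) = (\<Sum>j\<le>m. p ^ (j choose 2) * qbinomial p m j * y ^ j * z ^ (m - j))"
proof (induction m)
  case (Suc m)
  define S where "S = (\<Sum>j\<le>m. p ^ (j choose 2) * qbinomial p m j * y ^ j * z ^ (m - j))"
  define F where "F j = p ^ (j choose 2) * qbinomial p m j * y ^ j * z ^ (Suc m - j)" for j
  have z_part: "z * S = (\<Sum>j\<le>m. F j)"
    unfolding S_def sum_distrib_left F_def by (intro sum.cong refl) (simp add: Suc_diff_le algebra_simps)
  have y_part: "y * p ^ m * S =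
      (\<Sum>k\<le>m. p ^ (Suc k choose 2) * (p ^ (m - k) * qbinomial p m k) * y ^ Suc k * z ^ (m - k))"
    unfolding S_def sum_distrib_left
  proof (intro sum.cong refl)
    fix k assume "k \<in> {..m}"
    then have "(Suc k choose 2) + (m - k) = (k choose 2) + m" by (simp add: Suc_choose_two)
    then have "p ^ (Suc k choose 2) * p ^ (m - k) = p ^ (k choose 2) * p ^ m" by (metis power_add)
    then show "y * p ^ m * (p ^ (k choose 2) * qbinomial p m k * y ^ k * z ^ (m - k)) =
          p ^ (Suc k choose 2) * (p ^ (m - k) * qbinomial p m k) * y ^ Suc k * z ^ (m - k)"
      by (simp add: algebra_simps)
  qed
  have shifted: "(\<Sum>k\<le>m. p ^ (Suc k choose 2) * qbinomial p m (Suc k) * y ^ Suc k * z ^ (m - k)) =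
                 (\<Sum>j\<le>m. F j) - F 0"
    using sum_atMost_Suc_reindex[of F m] by (simp add: F_def qbinomial_eq_0)
  have "(\<Sum>j\<le>Suc m. p ^ (j choose 2) * qbinomial p (Suc m) j * y ^ j * z ^ (Suc m - j)) =
        z ^ Suc m + (\<Sum>k\<le>m. p ^ (Suc k choose 2) * qbinomial p (Suc m) (Suc k) * y ^ Suc k * z ^ (m - k))"
    unfolding sum.atMost_Suc_shift by (simp add: binomial_eq_0)
  also have "\<dots> = z ^ Suc m
        + (\<Sum>k\<le>m. p ^ (Suc k choose 2) * qbinomial p m (Suc k) * y ^ Suc k * z ^ (m - k))
        + (\<Sum>k\<le>m. p ^ (Suc k choose 2) * (p ^ (m - k) * qbinomial p m k) * y ^ Suc k * z ^ (m - k))"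
    unfolding qbinomial_Suc_Suc'[OF p0] by (simp add: algebra_simps sum.distrib)
  also have "\<dots> = (z + y * p ^ m) * S"
    unfolding shifted y_part[symmetric] distrib_right z_part[symmetric] by (simp add: F_def binomial_eq_0)
  finally show ?case using Suc.IH by (simp add: S_def ac_simps)
qed (simp add: binomial_eq_0)

section \<open>Schur's polynomials\<close>

definition alt_sign :: "int \<Rightarrow> 'a::ring_1" where
  "alt_sign t = (if even t then 1 else -1)"

lemma alt_sign_plus_1: "alt_sign (t + 1) = - alt_sign t"
  by (simp add: alt_sign_def)

lemma alt_sign_mult_nth: "(alt_sign t * f) $ j = alt_sign t * (f :: 'a::ring_1 fps) $ j"
  by (simp add: alt_sign_def)

definition rr_exponent :: "nat \<Rightarrow> int \<Rightarrow> nat" where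
  "rr_exponent s t = nat (t * (5 * t + 1 + 2 * int s) div 2)"

definition schur_index :: "nat \<Rightarrow> nat \<Rightarrow> int \<Rightarrow> int" where
  "schur_index s n t = (int n - int s - 5 * t) div 2"

text \<open>Schur's polynomials in the form used by Andrews; the terms with \<open>|t| > n\<close> vanish.\<close>
definition schur_term :: "nat \<Rightarrow> nat \<Rightarrow> int \<Rightarrow> rat fps" where
  "schur_term s n t = alt_sign t * fps_X ^ rr_exponent s t * qbinomial_int fps_X n (schur_index s n t)"

definition schur_poly :: "nat \<Rightarrow> nat \<Rightarrow> rat fps" where
  "schur_poly s n = (\<Sum>t\<in>{-int n..int n}. schur_term s n t)"

lemma rr_exponent_twice: "s \<le> 1 \<Longrightarrow> 2 * int (rr_exponent s t) = t * (5 * t + 1 + 2 * int s)"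
proof -
  assume s: "s \<le> 1"
  have "0 \<le> t * (5 * t + 1 + 2 * int s)"
    using s by (cases "t \<ge> 0") (auto simp: zero_le_mult_iff)
  moreover have "even (t * (5 * t + 1 + 2 * int s))"
    by (cases "even t") auto
  ultimately show ?thesis unfolding rr_exponent_def by simp
qed

lemma abs_le_rr_exponent: "s \<le> 1 \<Longrightarrow> nat \<bar>t\<bar> \<le> rr_exponent s t"
proof -
  assume s: "s \<le> 1"
  have "2 * \<bar>t\<bar> \<le> t * (5 * t + 1 + 2 * int s)"
  proof (cases "t \<ge> 0")
    case True
    then have "t * 2 \<le> t * (5 * t + 1 + 2 * int s)" if "t \<noteq> 0"
      using that by (intro mult_left_mono) auto
    with True show ?thesis by (cases "t = 0") auto
  next
    case False
    then have "(-t) * 2 \<le> (-t) * (-(5 * t + 1 + 2 * int s))"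
      using s by (intro mult_left_mono) auto
    with False show ?thesis by (simp add: algebra_simps)
  qed
  then show ?thesis using rr_exponent_twice[OF s, of t] by linarith
qed

lemma schur_term_eq_0:
  assumes "s \<le> 1" "\<bar>t\<bar> > int n"
  shows "schur_term s n t = 0"
proof -
  have "schur_index s n t < 0 \<or> schur_index s n t > int n"
    using assms unfolding schur_index_def by (cases "t \<ge> 0") auto
  then show ?thesis by (simp add: schur_term_def qbinomial_int_eq_0)
qed

lemma schur_poly_eq_sum: "s \<le> 1 \<Longrightarrow> n \<le> M \<Longrightarrow> schur_poly s n = (\<Sum>t\<in>{-int M..int M}. schur_term s n t)"
  unfolding schur_poly_def by (rule sum.mono_neutral_left) (auto intro!: schur_term_eq_0)

text \<open>A single Schur term satisfies the recurrence of \<open>schur_poly\<close> up to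
  \<open>schur_remainder s n t - schur_remainder s n (t + 1)\<close>, which telescopes in \<open>t\<close>.\<close>
definition schur_remainder :: "nat \<Rightarrow> nat \<Rightarrow> int \<Rightarrow> rat fps" where
  "schur_remainder s n t = (if even (int n - int s - 5 * t)
     then alt_sign t * fps_X ^ (rr_exponent s t + nat (schur_index s n t + 1))
            * qbinomial_int fps_X n (schur_index s n t + 1)
     else 0)"

lemma schur_term_rec_even:
  assumes "even (int n - int s - 5 * t)"
  shows "schur_term s (Suc (Suc n)) t - schur_term s (Suc n) t - fps_X ^ Suc n * schur_term s n t =
         schur_remainder s n t"
proof -
  define k where "k = schur_index s n t"
  have idx: "schur_index s (Suc n) t = k" "schur_index s (Suc (Suc n)) t = k + 1"
    unfolding k_def schur_index_def using assms by presburger+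
  have "schur_term s (Suc (Suc n)) t - schur_term s (Suc n) t - fps_X ^ Suc n * schur_term s n t =
        alt_sign t * fps_X ^ rr_exponent s t * (qbinomial_int fps_X (Suc (Suc n)) (k + 1)
          - qbinomial_int fps_X (Suc n) k - fps_X ^ Suc n * qbinomial_int fps_X n k)"
    unfolding schur_term_def idx k_def by (simp add: algebra_simps)
  also have "qbinomial_int fps_X (Suc (Suc n)) (k + 1) - qbinomial_int fps_X (Suc n) k
          - fps_X ^ Suc n * qbinomial_int fps_X n k = fps_X ^ nat (k + 1) * qbinomial_int (fps_X :: rat fps) n (k + 1)"
    by (rule qbinomial_int_Suc_Suc_diff) simp
  also have "alt_sign t * fps_X ^ rr_exponent s t * (fps_X ^ nat (k + 1) * qbinomial_int fps_X n (k + 1)) =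
             schur_remainder s n t"
    using assms unfolding schur_remainder_def k_def by (simp add: algebra_simps power_add)
  finally show ?thesis .
qed

lemma schur_term_rec_odd:
  assumes s: "s \<le> 1" and odd: "odd (int n - int s - 5 * t)"
  shows "schur_term s (Suc (Suc n)) t - schur_term s (Suc n) t - fps_X ^ Suc n * schur_term s n t =
         - schur_remainder s n (t + 1)"
proof -
  define k where "k = schur_index s n t"
  have idx: "schur_index s (Suc n) t = k + 1" "schur_index s (Suc (Suc n)) t = k + 1"
    "schur_index s n (t + 1) + 1 = k - 1" "2 * k = int n - int s - 5 * t - 1"
    unfolding k_def schur_index_def using odd by presburger+
  have exponent: "fps_X ^ (rr_exponent s t + nat (1 + int n - k)) * qbinomial_int fps_X n (k - 1) =
        fps_X ^ (rr_exponent s (t + 1) + nat (k - 1)) * qbinomial_int (fps_X :: rat fps) n (k - 1)"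
  proof (rule power_mult_qbinomial_int_cong)
    assume "0 \<le> k - 1" "k - 1 \<le> int n"
    then show "rr_exponent s t + nat (1 + int n - k) = rr_exponent s (t + 1) + nat (k - 1)"
      using idx(4) rr_exponent_twice[OF s, of t] rr_exponent_twice[OF s, of "t + 1"]
      by (simp add: algebra_simps)
  qed
  have "even (int n - int s - 5 * (t + 1))" using odd by presburger
  then have remainder: "schur_remainder s n (t + 1) =
      - alt_sign t * fps_X ^ (rr_exponent s (t + 1) + nat (k - 1)) * qbinomial_int fps_X n (k - 1)"
    unfolding schur_remainder_def idx(3) by (simp add: alt_sign_plus_1)
  have "schur_term s (Suc (Suc n)) t - schur_term s (Suc n) t - fps_X ^ Suc n * schur_term s n t =
        alt_sign t * fps_X ^ rr_exponent s t * (qbinomial_int fps_X (Suc (Suc n)) (k + 1)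
          - qbinomial_int fps_X (Suc n) (k + 1) - fps_X ^ Suc n * qbinomial_int fps_X n k)"
    unfolding schur_term_def idx(1,2) k_def by (simp add: algebra_simps)
  also have "qbinomial_int fps_X (Suc (Suc n)) (k + 1) - qbinomial_int fps_X (Suc n) (k + 1)
          - fps_X ^ Suc n * qbinomial_int fps_X n k = fps_X ^ nat (1 + int n - k) * qbinomial_int (fps_X :: rat fps) n (k - 1)"
    by (rule qbinomial_int_Suc_Suc_diff') simp
  also have "alt_sign t * fps_X ^ rr_exponent s t * (fps_X ^ nat (1 + int n - k) * qbinomial_int fps_X n (k - 1)) =
             alt_sign t * (fps_X ^ (rr_exponent s t + nat (1 + int n - k)) * qbinomial_int fps_X n (k - 1))"
    by (simp add: power_add algebra_simps)
  finally show ?thesis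
    unfolding exponent remainder by simp
qed

lemma schur_term_rec:
  "s \<le> 1 \<Longrightarrow> schur_term s (Suc (Suc n)) t - schur_term s (Suc n) t - fps_X ^ Suc n * schur_term s n t =
     schur_remainder s n t - schur_remainder s n (t + 1)"
  using schur_term_rec_even[of n s t] schur_term_rec_odd[of s n t]
  by (cases "even (int n - int s - 5 * t)") (auto simp: schur_remainder_def)

lemma schur_remainder_eq_0:
  assumes "s \<le> 1" "t \<ge> int n + 3 \<or> t \<le> - int n - 2"
  shows "schur_remainder s n t = 0"
proof -
  have "schur_index s n t + 1 < 0 \<or> schur_index s n t + 1 > int n"
    using assms unfolding schur_index_def by auto
  then show ?thesis by (simp add: schur_remainder_def qbinomial_int_eq_0)
qed

lemma sum_telescope_int:
  fixes f :: "int \<Rightarrow> 'a::ab_group_add"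
  assumes "a \<le> b + 1"
  shows "(\<Sum>t\<in>{a..b}. f t - f (t + 1)) = f a - f (b + 1)"
proof -
  have "(\<Sum>t\<in>{a..a + int m - 1}. f t - f (t + 1)) = f a - f (a + int m)" for m
  proof (induction m)
    case (Suc m)
    have "{a..a + int (Suc m) - 1} = insert (a + int m) {a..a + int m - 1}" by auto
    then show ?case using Suc by (simp add: algebra_simps)
  qed simp
  from this[of "nat (b + 1 - a)"] assms show ?thesis by simp
qed

lemma schur_poly_rec:
  assumes s: "s \<le> 1"
  shows "schur_poly s (Suc (Suc n)) = schur_poly s (Suc n) + fps_X ^ Suc n * schur_poly s n"
proof -
  let ?W = "{-int (Suc (Suc n))..int (Suc (Suc n))}"
  have "schur_poly s (Suc (Suc n)) - schur_poly s (Suc n) - fps_X ^ Suc n * schur_poly s n =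
        (\<Sum>t\<in>?W. schur_term s (Suc (Suc n)) t - schur_term s (Suc n) t - fps_X ^ Suc n * schur_term s n t)"
    using schur_poly_eq_sum[OF s, of "Suc n" "Suc (Suc n)"] schur_poly_eq_sum[OF s, of n "Suc (Suc n)"]
    by (simp add: schur_poly_def sum_subtractf sum_distrib_left)
  also have "\<dots> = (\<Sum>t\<in>?W. schur_remainder s n t - schur_remainder s n (t + 1))"
    using schur_term_rec[OF s] by simp
  also have "\<dots> = 0"
    using schur_remainder_eq_0[OF s] by (subst sum_telescope_int) auto
  finally show ?thesis by (simp add: algebra_simps)
qed

lemma schur_poly_1: "s \<le> 1 \<Longrightarrow> schur_poly s 1 = 1"
proof -
  assume "s \<le> 1"
  moreover have "{-1..1::int} = {-1, 0, 1}" by auto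
  ultimately show ?thesis
    by (auto simp: schur_poly_def schur_term_def schur_index_def qbinomial_int_def rr_exponent_def
        alt_sign_def qbinomial_eq_0)
qed

lemma schur_poly_0_2: "schur_poly 0 2 = 1 + fps_X"
proof -
  have "{-2..2::int} = {-2, -1, 0, 1, 2}" by auto
  then show ?thesis
    by (simp add: schur_poly_def schur_term_def schur_index_def qbinomial_int_def rr_exponent_def
        alt_sign_def qbinomial_eq_0 qbinomial_Suc_Suc numeral_2_eq_2)
qed

lemma schur_poly_1_2: "schur_poly 1 2 = 1"
proof -
  have "{-2..2::int} = {-2, -1, 0, 1, 2}" by auto
  then show ?thesis
    by (simp add: schur_poly_def schur_term_def schur_index_def qbinomial_int_def rr_exponent_def
        alt_sign_def qbinomial_eq_0)
qed

section \<open>The sums of the \<open>b\<^sub>n\<close> against Gaussian binomials\<close>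

declare bseq.simps(3) [simp del]

lemma fps_X_power_mult_bseq_Suc_Suc:
  assumes "n \<le> N"
  shows "fps_X ^ (N - n) * bseq i (Suc (Suc n)) =
         fps_X ^ Suc (Suc N) * bseq i n - fps_X ^ Suc N * bseq i (Suc n)"
proof -
  have "fps_X ^ (N - n) * (fps_X :: rat fps) ^ (n + 2) = fps_X ^ Suc (Suc N)"
    and "fps_X ^ (N - n) * (fps_X :: rat fps) ^ (n + 1) = fps_X ^ Suc N"
    using assms by (simp_all flip: power_add)
  then show ?thesis
    unfolding bseq.simps(3) right_diff_distrib by (simp only: mult.assoc[symmetric])
qed

definition bseq_qbinomial_sum :: "nat \<Rightarrow> nat \<Rightarrow> rat fps" where
  "bseq_qbinomial_sum i N = (\<Sum>n\<le>N. bseq i n * qbinomial fps_X N n)"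

definition bseq_shift_qbinomial_sum :: "nat \<Rightarrow> nat \<Rightarrow> rat fps" where
  "bseq_shift_qbinomial_sum i N = (\<Sum>n\<le>N. fps_X ^ (N - n) * bseq i (Suc n) * qbinomial fps_X N n)"

lemma bseq_qbinomial_sum_Suc:
  "bseq_qbinomial_sum i (Suc N) = bseq_qbinomial_sum i N + bseq_shift_qbinomial_sum i N"
proof -
  have "bseq_qbinomial_sum i (Suc N) =
        bseq i 0 + (\<Sum>n\<le>N. bseq i (Suc n) * qbinomial fps_X (Suc N) (Suc n))"
    unfolding bseq_qbinomial_sum_def sum.atMost_Suc_shift by simp
  also have "\<dots> = bseq i 0 + (\<Sum>n\<le>N. bseq i (Suc n) * qbinomial fps_X N (Suc n))
                  + bseq_shift_qbinomial_sum i N"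
    unfolding bseq_shift_qbinomial_sum_def qbinomial_Suc_Suc'[of fps_X, simplified]
    by (simp add: distrib_left sum.distrib ac_simps)
  also have "bseq i 0 + (\<Sum>n\<le>N. bseq i (Suc n) * qbinomial fps_X N (Suc n)) = bseq_qbinomial_sum i N"
    unfolding bseq_qbinomial_sum_def sum_atMost_Suc_reindex[of "\<lambda>n. bseq i n * qbinomial fps_X N n"]
    by (simp add: qbinomial_eq_0)
  finally show ?thesis .
qed

lemma bseq_shift_qbinomial_sum_Suc:
  "bseq_shift_qbinomial_sum i (Suc N) = fps_X ^ Suc (Suc N) * bseq_qbinomial_sum i N"
proof -
  define S where "S = (\<Sum>n\<le>N. bseq i (Suc n) * qbinomial fps_X N n)"
  have "bseq_shift_qbinomial_sum i (Suc N) = fps_X ^ Suc N * bseq i 1 +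
      (\<Sum>n\<le>N. fps_X ^ (N - n) * bseq i (Suc (Suc n)) * qbinomial fps_X (Suc N) (Suc n))"
    unfolding bseq_shift_qbinomial_sum_def sum.atMost_Suc_shift by simp
  also have "(\<Sum>n\<le>N. fps_X ^ (N - n) * bseq i (Suc (Suc n)) * qbinomial fps_X (Suc N) (Suc n)) =
      (\<Sum>n\<le>N. fps_X ^ (N - n) * bseq i (Suc (Suc n)) * qbinomial fps_X N n) +
      fps_X ^ Suc N * (\<Sum>n\<le>N. bseq i (Suc (Suc n)) * qbinomial fps_X N (Suc n))"
  proof -
    have "fps_X ^ (N - n) * (fps_X :: rat fps) ^ Suc n = fps_X ^ Suc N" if "n \<le> N" for n
      using that by (simp flip: power_add)
    then have "fps_X ^ (N - n) * bseq i (Suc (Suc n)) * qbinomial fps_X (Suc N) (Suc n) =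
        fps_X ^ (N - n) * bseq i (Suc (Suc n)) * qbinomial fps_X N n +
        fps_X ^ Suc N * (bseq i (Suc (Suc n)) * qbinomial fps_X N (Suc n))" if "n \<le> N" for n
      using that unfolding qbinomial_Suc_Suc by (simp add: algebra_simps)
    then show ?thesis
      by (simp add: sum.distrib sum_distrib_left)
  qed
  also have "(\<Sum>n\<le>N. bseq i (Suc (Suc n)) * qbinomial fps_X N (Suc n)) = S - bseq i 1"
    unfolding S_def sum_atMost_Suc_reindex[of "\<lambda>n. bseq i (Suc n) * qbinomial fps_X N n"]
    by (simp add: qbinomial_eq_0)
  also have "(\<Sum>n\<le>N. fps_X ^ (N - n) * bseq i (Suc (Suc n)) * qbinomial fps_X N n) =
      fps_X ^ Suc (Suc N) * bseq_qbinomial_sum i N - fps_X ^ Suc N * S"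
  proof -
    have "fps_X ^ (N - n) * bseq i (Suc (Suc n)) * qbinomial fps_X N n =
          fps_X ^ Suc (Suc N) * (bseq i n * qbinomial fps_X N n)
            - fps_X ^ Suc N * (bseq i (Suc n) * qbinomial fps_X N n)" if "n \<le> N" for n
      using fps_X_power_mult_bseq_Suc_Suc[OF that, of i] by (metis left_diff_distrib mult.assoc)
    then show ?thesis
      unfolding bseq_qbinomial_sum_def S_def by (simp add: sum_subtractf sum_distrib_left)
  qed
  finally show ?thesis by (simp add: algebra_simps)
qed

lemma bseq_qbinomial_sum_rec:
  "bseq_qbinomial_sum i (Suc (Suc N)) =
     bseq_qbinomial_sum i (Suc N) + fps_X ^ Suc (Suc N) * bseq_qbinomial_sum i N"
  using bseq_qbinomial_sum_Suc[of i "Suc N"] bseq_shift_qbinomial_sum_Suc[of i N] by simp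

lemma bseq_qbinomial_sum_eq_schur_poly:
  assumes i: "i \<in> {1, 2}"
  shows "bseq_qbinomial_sum i N = schur_poly (i - 1) (Suc N)"
proof (induction N rule: nat_less_induct)
  case (1 N)
  have s: "i - 1 \<le> 1" using i by auto
  consider "N = 0" | "N = 1" | M where "N = Suc (Suc M)"
    by (metis One_nat_def not0_implies_Suc)
  then show ?case
  proof cases
    case 1
    then show ?thesis using schur_poly_1[OF s] by (simp add: bseq_qbinomial_sum_def)
  next
    case 2
    then show ?thesis
      using i schur_poly_0_2 schur_poly_1_2 by (auto simp: bseq_qbinomial_sum_def numeral_2_eq_2)
  next
    case (3 M)
    then show ?thesis
      using 1 bseq_qbinomial_sum_rec[of i M] schur_poly_rec[OF s, of "Suc M"] by simp
  qed
qed

section \<open>Theta series and Jacobi's triple product\<close>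

text \<open>The coefficient of \<open>X^c\<close> collects the \<open>t\<close> with \<open>rr_exponent s t = c\<close>, all of which
  satisfy \<open>|t| \<le> c\<close> by \<open>abs_le_rr_exponent\<close>.\<close>
definition rr_theta :: "nat \<Rightarrow> rat fps" where
  "rr_theta s = Abs_fps (\<lambda>c. \<Sum>t\<in>{-int c..int c}. if rr_exponent s t = c then alt_sign t else 0)"

lemma rr_sum_nth:
  assumes s: "s \<le> 1" and "j \<le> M"
  shows "(\<Sum>t\<in>{-int M..int M}. alt_sign t * fps_X ^ rr_exponent s t * F t) $ j =
         (\<Sum>t\<in>{-int j..int j}. if rr_exponent s t \<le> j then alt_sign t * F t $ (j - rr_exponent s t) else 0)"
proof -
  have "(\<Sum>t\<in>{-int M..int M}. alt_sign t * fps_X ^ rr_exponent s t * F t) $ j =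
        (\<Sum>t\<in>{-int M..int M}. if rr_exponent s t \<le> j then alt_sign t * F t $ (j - rr_exponent s t) else 0)"
    by (auto simp: fps_sum_nth alt_sign_mult_nth mult.assoc fps_X_power_mult_nth intro!: sum.cong)
  also have "\<dots> = (\<Sum>t\<in>{-int j..int j}. if rr_exponent s t \<le> j then alt_sign t * F t $ (j - rr_exponent s t) else 0)"
  proof (rule sum.mono_neutral_right)
    show "\<forall>t\<in>{-int M..int M} - {-int j..int j}.
            (if rr_exponent s t \<le> j then alt_sign t * F t $ (j - rr_exponent s t) else 0) = 0"
    proof
      fix t assume "t \<in> {-int M..int M} - {-int j..int j}"
      then have "rr_exponent s t > j" using abs_le_rr_exponent[OF s, of t] by auto
      then show "(if rr_exponent s t \<le> j then alt_sign t * F t $ (j - rr_exponent s t) else 0) = 0"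
        by simp
    qed
  qed (use assms in auto)
  finally show ?thesis .
qed

lemma fps_agree_rr_theta:
  assumes s: "s \<le> 1"
  shows "fps_agree c (rr_theta s) (\<Sum>t\<in>{-int c..int c}. alt_sign t * fps_X ^ rr_exponent s t)"
  unfolding fps_agree_def
proof (intro allI impI)
  fix j assume "j \<le> c"
  then have "(\<Sum>t\<in>{-int c..int c}. alt_sign t * fps_X ^ rr_exponent s t * 1) $ j =
      (\<Sum>t\<in>{-int j..int j}. if rr_exponent s t \<le> j then alt_sign t * 1 $ (j - rr_exponent s t) else 0)"
    by (rule rr_sum_nth[OF s])
  also have "\<dots> = rr_theta s $ j"
    by (auto simp: rr_theta_def intro!: sum.cong)
  finally show "rr_theta s $ j = (\<Sum>t\<in>{-int c..int c}. alt_sign t * fps_X ^ rr_exponent s t) $ j"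
    by simp
qed

lemma tendsto_rr_theta_sum:
  assumes s: "s \<le> 1" and w: "\<And>n. n \<le> w n"
    and f: "\<And>c t. eventually (\<lambda>n. fps_agree c (f n t) G) sequentially"
  shows "(\<lambda>n. \<Sum>t\<in>{-int (w n)..int (w n)}. alt_sign t * fps_X ^ rr_exponent s t * f n t)
           \<longlonglongrightarrow> G * rr_theta s"
  unfolding tendsto_fps_iff_agree
proof
  fix c
  define P where "P = (\<Sum>t\<in>{-int c..int c}. alt_sign t * fps_X ^ rr_exponent s t * G)"
  have "fps_agree c (G * rr_theta s) (G * (\<Sum>t\<in>{-int c..int c}. alt_sign t * fps_X ^ rr_exponent s t))"
    by (intro fps_agree_mult fps_agree_rr_theta[OF s]) simp
  then have theta: "fps_agree c (G * rr_theta s) P"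
    by (simp add: P_def sum_distrib_left mult.commute)
  have "eventually (\<lambda>n. \<forall>t\<in>{-int c..int c}. fps_agree c (f n t) G) sequentially"
    by (rule eventually_ball_finite) (use f in auto)
  moreover have "eventually (\<lambda>n. c \<le> n) sequentially" by (rule eventually_ge_at_top)
  ultimately show "eventually (\<lambda>n. fps_agree c
      (\<Sum>t\<in>{-int (w n)..int (w n)}. alt_sign t * fps_X ^ rr_exponent s t * f n t) (G * rr_theta s)) sequentially"
  proof eventually_elim
    case (elim n)
    have "fps_agree c (\<Sum>t\<in>{-int (w n)..int (w n)}. alt_sign t * fps_X ^ rr_exponent s t * f n t) P"
      unfolding fps_agree_def
    proof (intro allI impI)
      fix j assume j: "j \<le> c"
      have "f n t $ (j - rr_exponent s t) = G $ (j - rr_exponent s t)" if "t \<in> {-int j..int j}" for t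
        using elim(1) that j by (force simp: fps_agree_def)
      moreover have "j \<le> w n" using j elim(2) w[of n] by linarith
      ultimately show "(\<Sum>t\<in>{-int (w n)..int (w n)}. alt_sign t * fps_X ^ rr_exponent s t * f n t) $ j = P $ j"
        unfolding P_def rr_sum_nth[OF s \<open>j \<le> w n\<close>] rr_sum_nth[OF s j] by (intro sum.cong) auto
    qed
    then show ?case using theta by (meson fps_agree_sym fps_agree_trans)
  qed
qed

lemma sum_lessThan_eq_choose_two: "(\<Sum>k<n. k) = n choose 2"
  by (induction n) (simp_all add: Suc_choose_two binomial_eq_0)

lemma twice_choose_two: "2 * (n choose 2) + n = n * n"
  by (induction n) (simp_all add: Suc_choose_two binomial_eq_0 algebra_simps)

lemma minus_one_power_eq_alt_sign: "(-1 :: 'a::ring_1) ^ j = (-1) ^ n * alt_sign (int j - int n)"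
  unfolding alt_sign_def by (auto simp: minus_one_power_iff)

lemma triple_product_exponent:
  assumes s: "s \<le> 1" and n: "1 \<le> n" and j: "j \<le> 2 * n"
  shows "5 * (j choose 2) + (5 * n - (s + 3)) * (2 * n - j) =
         (5 * n - (s + 3)) * n + 5 * (n choose 2) + rr_exponent s (int j - int n)"
proof -
  have "2 * int (j choose 2) = int j * int j - int j"
    using arg_cong[OF twice_choose_two[of j], of int] by simp
  moreover have "2 * int (n choose 2) = int n * int n - int n"
    using arg_cong[OF twice_choose_two[of n], of int] by simp
  moreover have a: "int (5 * n - (s + 3)) = 5 * int n - int s - 3"
    and b: "int (2 * n - j) = 2 * int n - int j"
    using s n j by linarith+
  ultimately have "2 * int (5 * (j choose 2) + (5 * n - (s + 3)) * (2 * n - j)) =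
        2 * int ((5 * n - (s + 3)) * n + 5 * (n choose 2) + rr_exponent s (int j - int n))"
    unfolding of_nat_add of_nat_mult a b
    using rr_exponent_twice[OF s, of "int j - int n"] by (simp add: algebra_simps)
  then show ?thesis
    by (metis mult_left_cancel of_nat_eq_iff zero_neq_numeral)
qed

lemma triple_product_upper_half:
  assumes s: "s \<le> 1" and n: "1 \<le> n"
  shows "(\<Prod>k<n. fps_X ^ (5 * n - (s + 3)) - (fps_X ^ 5) ^ (n + k)) =
         fps_X ^ ((5 * n - (s + 3)) * n) * qpoch (fps_X ^ (s + 3) :: rat fps) (fps_X ^ 5) n"
proof -
  have "fps_X ^ (5 * n - (s + 3)) - (fps_X ^ 5) ^ (n + k) =
        fps_X ^ (5 * n - (s + 3)) * (1 - fps_X ^ (s + 3 + 5 * k) :: rat fps)" for k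
  proof -
    have "5 * n - (s + 3) + (s + 3 + 5 * k) = 5 * (n + k)" using s n by simp
    then have "fps_X ^ (5 * n - (s + 3)) * fps_X ^ (s + 3 + 5 * k) = (fps_X ^ 5 :: rat fps) ^ (n + k)"
      by (simp flip: power_add power_mult)
    then show ?thesis by (simp add: algebra_simps)
  qed
  then show ?thesis
    by (simp add: qpoch_fps_X_power prod.distrib power_mult)
qed

lemma triple_product_lower_half:
  assumes s: "s \<le> 1"
  shows "(\<Prod>k<n. fps_X ^ (5 * n - (s + 3)) - (fps_X ^ 5) ^ k) =
         (-1) ^ n * fps_X ^ (5 * (n choose 2)) * qpoch (fps_X ^ (2 - s) :: rat fps) (fps_X ^ 5) n"
proof -
  have "(\<Prod>k<n. fps_X ^ (5 * n - (s + 3)) - (fps_X ^ 5) ^ k) =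
        (\<Prod>k<n. fps_X ^ (5 * n - (s + 3)) - (fps_X ^ 5) ^ (n - Suc k) :: rat fps)"
    by (rule prod.nat_diff_reindex[symmetric])
  also have "\<dots> = (\<Prod>k<n. (-1) * fps_X ^ (5 * (n - Suc k)) * (1 - fps_X ^ (2 - s + 5 * k)))"
  proof (intro prod.cong refl)
    fix k assume "k \<in> {..<n}"
    then have "5 * (n - Suc k) + (2 - s + 5 * k) = 5 * n - (s + 3)" using s by simp
    then have "fps_X ^ (5 * (n - Suc k)) * fps_X ^ (2 - s + 5 * k) = (fps_X ^ (5 * n - (s + 3)) :: rat fps)"
      by (simp flip: power_add)
    then show "fps_X ^ (5 * n - (s + 3)) - (fps_X ^ 5) ^ (n - Suc k) =
               (-1) * fps_X ^ (5 * (n - Suc k)) * (1 - fps_X ^ (2 - s + 5 * k) :: rat fps)"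
      by (simp add: algebra_simps flip: power_mult)
  qed
  also have "\<dots> = (-1) ^ n * (\<Prod>k<n. (fps_X :: rat fps) ^ (5 * (n - Suc k))) *
                     qpoch (fps_X ^ (2 - s) :: rat fps) (fps_X ^ 5) n"
    unfolding prod.distrib qpoch_fps_X_power by simp
  also have "(\<Prod>k<n. (fps_X :: rat fps) ^ (5 * (n - Suc k))) = (\<Prod>k<n. fps_X ^ (5 * k))"
    by (rule prod.nat_diff_reindex)
  also have "\<dots> = fps_X ^ (5 * (n choose 2))"
    unfolding power_sum[symmetric] sum_lessThan_eq_choose_two[symmetric] sum_distrib_left ..
  finally show ?thesis .
qed

lemma prod_lessThan_add: "(\<Prod>j<n + m. f j) = (\<Prod>j<n. f j) * (\<Prod>k<m. f (n + k))" for n m :: nat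
  by (induction m) (auto simp: ac_simps)

lemma finite_jacobi_triple_product:
  assumes s: "s \<le> 1"
  shows "qpoch (fps_X ^ (s + 3) :: rat fps) (fps_X ^ 5) n * qpoch (fps_X ^ (2 - s)) (fps_X ^ 5) n =
         (\<Sum>t\<in>{-int n..int n}. alt_sign t * fps_X ^ rr_exponent s t * qbinomial_int (fps_X ^ 5) (2 * n) (int n + t))"
proof (cases "n = 0")
  case True
  then show ?thesis by (simp add: alt_sign_def rr_exponent_def qbinomial_int_def)
next
  case False
  then have n: "1 \<le> n" by simp
  define z :: "rat fps" where "z = fps_X ^ (5 * n - (s + 3))"
  define p :: "rat fps" where "p = fps_X ^ 5"
  define M where "M = (5 * n - (s + 3)) * n + 5 * (n choose 2)"
  define summand where "summand j = alt_sign (int j - int n) * fps_X ^ rr_exponent s (int j - int n) * qbinomial p (2 * n) j"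
    for j
  have "(-1) ^ n * fps_X ^ M * (qpoch (fps_X ^ (s + 3)) p n * qpoch (fps_X ^ (2 - s)) p n) =
        (\<Prod>j<2 * n. z + (-1) * p ^ j)"
    unfolding mult_2 prod_lessThan_add
    using triple_product_upper_half[OF s n] triple_product_lower_half[OF s, of n]
    by (simp add: z_def p_def M_def power_add algebra_simps)
  also have "\<dots> = (\<Sum>j\<le>2 * n. p ^ (j choose 2) * qbinomial p (2 * n) j * (-1) ^ j * z ^ (2 * n - j))"
    by (rule qbinomial_theorem) (simp add: p_def)
  also have "\<dots> = (\<Sum>j\<le>2 * n. (-1) ^ n * fps_X ^ M * summand j)"
  proof (intro sum.cong refl)
    fix j assume "j \<in> {..2 * n}"
    then have "p ^ (j choose 2) * z ^ (2 * n - j) = fps_X ^ M * fps_X ^ rr_exponent s (int j - int n)"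
      using triple_product_exponent[OF s n, of j] unfolding M_def p_def z_def
      by (simp flip: power_add power_mult add: mult.commute)
    then show "p ^ (j choose 2) * qbinomial p (2 * n) j * (-1) ^ j * z ^ (2 * n - j) =
               (-1) ^ n * fps_X ^ M * summand j"
      unfolding summand_def minus_one_power_eq_alt_sign[of j n] by (simp add: algebra_simps)
  qed
  also have "\<dots> = (-1) ^ n * fps_X ^ M *
      (\<Sum>t\<in>{-int n..int n}. alt_sign t * fps_X ^ rr_exponent s t * qbinomial_int p (2 * n) (int n + t))"
    unfolding sum_distrib_left[symmetric]
    by (rule arg_cong[where f = "\<lambda>x. (-1) ^ n * fps_X ^ M * x"],
        rule sum.reindex_bij_witness[of _ "\<lambda>t. nat (t + int n)" "\<lambda>j. int j - int n"])
       (auto simp: summand_def qbinomial_int_def add.commute)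
  finally show ?thesis
    unfolding p_def by (simp add: mult_left_cancel)
qed

lemma qpoch_mult_tendsto:
  assumes "a \<ge> 1" "b \<ge> 1" "d \<ge> 1"
  shows "(\<lambda>n. qpoch (fps_X ^ a :: 'a::comm_ring_1 fps) (fps_X ^ d) n * qpoch (fps_X ^ b) (fps_X ^ d) n)
           \<longlonglongrightarrow> qpoch_inf (fps_X ^ a) (fps_X ^ d) * qpoch_inf (fps_X ^ b) (fps_X ^ d)"
  unfolding tendsto_fps_iff_agree
proof
  fix c
  show "eventually (\<lambda>n. fps_agree c (qpoch (fps_X ^ a :: 'a fps) (fps_X ^ d) n * qpoch (fps_X ^ b) (fps_X ^ d) n)
          (qpoch_inf (fps_X ^ a) (fps_X ^ d) * qpoch_inf (fps_X ^ b) (fps_X ^ d))) sequentially"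
    using eventually_ge_at_top[of c]
    by eventually_elim (use assms in \<open>auto intro!: fps_agree_mult fps_agree_sym[OF fps_agree_qpoch_inf]\<close>)
qed

abbreviation qpoch_inf5 :: "nat \<Rightarrow> rat fps" where
  "qpoch_inf5 r \<equiv> qpoch_inf (fps_X ^ r) (fps_X ^ 5)"

abbreviation euler_product :: "rat fps" where
  "euler_product \<equiv> qpoch_inf (fps_X ^ 1) (fps_X ^ 1)"

text \<open>The limit of \<open>finite_jacobi_triple_product\<close>: the Gaussian binomials \<open>[2n, n+t]\<close>
  in \<open>q^5\<close> tend to \<open>1/(q^5;q^5)_oo\<close>.\<close>
lemma jacobi_triple_product:
  assumes s: "s \<le> 1"
  shows "rr_theta s = qpoch_inf5 5 * (qpoch_inf5 (s + 3) * qpoch_inf5 (2 - s))"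
proof -
  have "(\<lambda>n. qpoch (fps_X ^ (s + 3) :: rat fps) (fps_X ^ 5) n * qpoch (fps_X ^ (2 - s)) (fps_X ^ 5) n)
          \<longlonglongrightarrow> inverse (qpoch_inf5 5) * rr_theta s"
    unfolding finite_jacobi_triple_product[OF s]
  proof (rule tendsto_rr_theta_sum[OF s])
    fix c t
    show "eventually (\<lambda>n. fps_agree c (qbinomial_int (fps_X ^ 5) (2 * n) (int n + t)) (inverse (qpoch_inf5 5)))
            sequentially"
      using eventually_ge_at_top[of "c + nat \<bar>t\<bar>"]
    proof eventually_elim
      case (elim n)
      then have "fps_agree c (qbinomial (fps_X ^ 5 :: rat fps) (2 * n) (nat (int n + t))) (inverse (qpoch_inf5 5))"
        by (intro fps_agree_qbinomial_inverse_qpoch_inf) linarith+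
      moreover have "int n + t \<ge> 0" using elim by linarith
      ultimately show ?case by (simp add: qbinomial_int_def)
    qed
  qed simp
  moreover have "(\<lambda>n. qpoch (fps_X ^ (s + 3) :: rat fps) (fps_X ^ 5) n * qpoch (fps_X ^ (2 - s)) (fps_X ^ 5) n)
          \<longlonglongrightarrow> qpoch_inf5 (s + 3) * qpoch_inf5 (2 - s)"
    using s by (intro qpoch_mult_tendsto) auto
  ultimately have "qpoch_inf5 (s + 3) * qpoch_inf5 (2 - s) = inverse (qpoch_inf5 5) * rr_theta s"
    using LIMSEQ_unique by blast
  moreover have "qpoch_inf5 5 * inverse (qpoch_inf5 5) = 1"
    by (rule inverse_mult_eq_1') simp
  ultimately show ?thesis by (simp add: mult.assoc[symmetric])
qed

section \<open>Passing to the limit\<close>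

lemma schur_poly_tendsto:
  assumes s: "s \<le> 1"
  shows "(\<lambda>N. schur_poly s (Suc N)) \<longlonglongrightarrow> inverse euler_product * rr_theta s"
  unfolding schur_poly_def schur_term_def
proof (rule tendsto_rr_theta_sum[OF s])
  fix c t
  show "eventually (\<lambda>N. fps_agree c (qbinomial_int fps_X (Suc N) (schur_index s (Suc N) t))
          (inverse euler_product)) sequentially"
    using eventually_ge_at_top[of "2 * c + 5 * nat \<bar>t\<bar> + 4"]
  proof eventually_elim
    case (elim N)
    have index: "schur_index s (Suc N) t \<ge> int c" "int (Suc N) - schur_index s (Suc N) t \<ge> int c"
      unfolding schur_index_def using elim s by auto
    then have "fps_agree c (qbinomial (fps_X ^ 1) (Suc N) (nat (schur_index s (Suc N) t)))
                 (inverse euler_product)"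
      by (intro fps_agree_qbinomial_inverse_qpoch_inf) linarith+
    then show ?case using index by (simp add: qbinomial_int_def)
  qed
qed simp

lemma bseq_nth_eq_0: "j + 1 < n \<Longrightarrow> bseq i n $ j = 0"
proof -
  assume "j + 1 < n"
  moreover define m where "m = n - 2"
  ultimately have n: "n = Suc (Suc m)" and "j < Suc m" by auto
  then show ?thesis
    unfolding n bseq.simps(3) by (simp only: fps_sub_nth fps_X_power_mult_nth) simp
qed
text \<open>Since \<open>X^(n-1)\<close> divides \<open>b_n\<close>, replacing \<open>[N, n]\<close> by \<open>1/(q;q)_n\<close> does not
  change the coefficients below \<open>X^N\<close>.\<close>
lemma bseq_qbinomial_sum_nth:
  assumes "c < N"
  shows "bseq_qbinomial_sum i N $ c = (\<Sum>n\<le>N. bseq i n * inverse (qfact fps_X n)) $ c"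
proof -
  have "(bseq i n * (qbinomial fps_X N n - inverse (qfact fps_X n))) $ c = 0" if n: "n \<le> N" for n
  proof -
    have agree: "fps_agree (N - n) (qbinomial (fps_X ^ 1 :: rat fps) N n) (inverse (qfact (fps_X ^ 1) n))"
      using n by (intro fps_agree_qbinomial_inverse_qfact) auto
    show ?thesis unfolding fps_mult_nth
    proof (intro sum.neutral ballI)
      fix j assume j: "j \<in> {0..c}"
      show "bseq i n $ j * (qbinomial fps_X N n - inverse (qfact fps_X n)) $ (c - j) = 0"
      proof (cases "j + 1 < n")
        case False
        then have "c - j \<le> N - n" using j assms n by auto
        then show ?thesis using agree by (simp add: fps_agree_def)
      qed (simp add: bseq_nth_eq_0)
    qed
  qed
  then have "(bseq_qbinomial_sum i N - (\<Sum>n\<le>N. bseq i n * inverse (qfact fps_X n))) $ c = 0"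
    unfolding bseq_qbinomial_sum_def by (simp add: fps_sum_nth sum_subtractf right_diff_distrib)
  then show ?thesis by simp
qed

lemma bseq_partial_sums_tendsto:
  assumes i: "i \<in> {1, 2}"
  shows "(\<lambda>N. \<Sum>n<N. bseq i n / qfact fps_X n) \<longlonglongrightarrow> inverse euler_product * rr_theta (i - 1)"
proof -
  have s: "i - 1 \<le> 1" using i by auto
  have divide: "bseq i n / qfact fps_X n = bseq i n * inverse (qfact fps_X n)" for n
    by (rule fps_divide_unit) (simp add: qpoch_nth_0)
  have sums: "(\<lambda>N. bseq_qbinomial_sum i N) \<longlonglongrightarrow> inverse euler_product * rr_theta (i - 1)"
    using schur_poly_tendsto[OF s] by (simp add: bseq_qbinomial_sum_eq_schur_poly[OF i])
  have "(\<lambda>N. \<Sum>n<Suc N. bseq i n / qfact fps_X n) \<longlonglongrightarrow> inverse euler_product * rr_theta (i - 1)"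
    unfolding tendsto_fps_iff
  proof
    fix c
    show "eventually (\<lambda>N. (\<Sum>n<Suc N. bseq i n / qfact fps_X n) $ c =
            (inverse euler_product * rr_theta (i - 1)) $ c) sequentially"
      using sums[unfolded tendsto_fps_iff, rule_format, of c] eventually_gt_at_top[of c]
      by eventually_elim (simp add: bseq_qbinomial_sum_nth divide lessThan_Suc_atMost)
  qed
  then show ?thesis by (rule LIMSEQ_imp_Suc)
qed


lemma qpoch_fps_X_power_add:
  "qpoch (fps_X ^ r :: 'a::comm_ring_1 fps) (fps_X ^ d) (m + k) =
   qpoch (fps_X ^ r) (fps_X ^ d) m * (\<Prod>j<k. 1 - fps_X ^ (r + d * (m + j)))"
  unfolding qpoch_fps_X_power prod_lessThan_add ..

lemma qpoch_fps_X_power_Suc: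
  "qpoch (fps_X ^ r :: 'a::comm_ring_1 fps) (fps_X ^ d) (Suc m) =
   qpoch (fps_X ^ r) (fps_X ^ d) m * (1 - fps_X ^ (r + d * m))"
  unfolding qpoch_fps_X_power by simp

lemma qpoch_fps_X_5_mult:
  "qpoch (fps_X ^ 1 :: 'a::comm_ring_1 fps) (fps_X ^ 1) (5 * n) =
   qpoch (fps_X ^ 1) (fps_X ^ 5) n * qpoch (fps_X ^ 2) (fps_X ^ 5) n * qpoch (fps_X ^ 3) (fps_X ^ 5) n *
   qpoch (fps_X ^ 4) (fps_X ^ 5) n * qpoch (fps_X ^ 5) (fps_X ^ 5) n"
proof (induction n)
  case (Suc n)
  have five: "5 * Suc n = 5 * n + 5" by simp
  have prod5: "(\<Prod>j<5. g j) = g 0 * g 1 * g 2 * g 3 * g 4" for g :: "nat \<Rightarrow> 'a fps"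
    by (simp add: lessThan_nat_numeral ac_simps)
  have exps: "1 + 1 * (5 * n + 0) = 1 + 5 * n" "1 + 1 * (5 * n + 1) = 2 + 5 * n"
    "1 + 1 * (5 * n + 2) = 3 + 5 * n" "1 + 1 * (5 * n + 3) = 4 + 5 * n" "1 + 1 * (5 * n + 4) = 5 + 5 * n"
    by simp_all
  show ?case
    unfolding five qpoch_fps_X_power_add prod5 exps qpoch_fps_X_power_Suc Suc.IH by (simp only: ac_simps)
qed (simp add: qpoch_def)

lemma euler_product_eq_qpoch_inf5:
  "euler_product = qpoch_inf5 1 * qpoch_inf5 2 * qpoch_inf5 3 * qpoch_inf5 4 * qpoch_inf5 5"
  unfolding fps_eq_iff_agree
proof
  fix c
  have "fps_agree c euler_product (qpoch (fps_X ^ 1) (fps_X ^ 1) (5 * c))"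
    by (rule fps_agree_qpoch_inf) auto
  also have "fps_agree c (qpoch (fps_X ^ 1) (fps_X ^ 1) (5 * c))
      (qpoch_inf5 1 * qpoch_inf5 2 * qpoch_inf5 3 * qpoch_inf5 4 * qpoch_inf5 5)"
    unfolding qpoch_fps_X_5_mult
    by (intro fps_agree_mult fps_agree_sym[OF fps_agree_qpoch_inf]) auto
  finally show "fps_agree c euler_product
      (qpoch_inf5 1 * qpoch_inf5 2 * qpoch_inf5 3 * qpoch_inf5 4 * qpoch_inf5 5)" .
qed

lemma euler_product_eq_rr_theta:
  assumes "s \<le> 1"
  shows "euler_product = qpoch_inf5 (s + 1) * qpoch_inf5 (4 - s) * rr_theta s"
proof -
  from assms consider "s = 0" | "s = 1" by linarith
  then show ?thesis
  proof cases
    case 1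
    have e: "(0::nat) + 1 = 1" "(4::nat) - 0 = 4" "(0::nat) + 3 = 3" "(2::nat) - 0 = 2" by simp_all
    have "rr_theta 0 = qpoch_inf5 5 * (qpoch_inf5 3 * qpoch_inf5 2)"
      using jacobi_triple_product[of 0] by (simp only: e le0)
    then show ?thesis
      unfolding 1 e euler_product_eq_qpoch_inf5 by (simp only: ac_simps)
  next
    case 2
    have e: "(1::nat) + 1 = 2" "(4::nat) - 1 = 3" "(1::nat) + 3 = 4" "(2::nat) - 1 = 1" by simp_all
    have "rr_theta 1 = qpoch_inf5 5 * (qpoch_inf5 4 * qpoch_inf5 1)"
      using jacobi_triple_product[of 1] by (simp only: e order.refl)
    then show ?thesis
      unfolding 2 e euler_product_eq_qpoch_inf5 by (simp only: ac_simps)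
  qed
qed

theorem theorem1p1:
  fixes i :: nat
  assumes "i \<in> {1, 2}"
  shows "(\<lambda>n. bseq i n / qpoch fps_X fps_X n) sums
           inverse (qpoch_inf (fps_X ^ i) (fps_X ^ 5) * qpoch_inf (fps_X ^ (5 - i)) (fps_X ^ 5))"
proof -
  define s where "s = i - 1"
  have s: "s \<le> 1" and i: "s + 1 = i" "4 - s = 5 - i" using assms by (auto simp: s_def)
  have theta0: "rr_theta s $ 0 \<noteq> 0"
    using s by (simp add: jacobi_triple_product)
  have "inverse euler_product * rr_theta s =
      inverse (qpoch_inf5 (s + 1) * qpoch_inf5 (4 - s)) * (inverse (rr_theta s) * rr_theta s)"
    unfolding euler_product_eq_rr_theta[OF s] fps_inverse_mult by (simp only: ac_simps)
  also have "inverse (rr_theta s) * rr_theta s = 1"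
    using theta0 by (rule inverse_mult_eq_1)
  finally have "inverse euler_product * rr_theta s =
      inverse (qpoch_inf (fps_X ^ i) (fps_X ^ 5) * qpoch_inf (fps_X ^ (5 - i)) (fps_X ^ 5))"
    unfolding i by simp
  then show ?thesis
    using bseq_partial_sums_tendsto[OF assms] unfolding sums_def s_def by simp
qed

end
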